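(* For every $n\ge 3$, $\lceil \log_2 n\rceil\le \mathrm{isat}(n,\bowtie)\le \binom{n}{2}+2n-1$.
   Context: $\mathcal{B}_n$ denotes the Boolean lattice $(2^{[n]},\subseteq)$. A family $\mathcal{F}\subseteq 2^{[n]}$ (ordered by inclusion) is induced-$\mathcal{P}$-saturated if it contains no induced copy of $\mathcal{P}$ (an injection $f$ with $u\le v\iff f(u)\subseteq f(v)$) but every family $\mathcal{F}'$ with $\mathcal{F}\subsetneq\mathcal{F}'\subseteq 2^{[n]}$ contains one. $\mathrm{isat}(n,\mathcal{P})$ is the minimum size of an induced-$\mathcal{P}$-saturated family in $\mathcal{B}_n$. The butterfly $\bowtie$ is the four-element poset on $\{A,B,C,D\}$ whose only strict relations are $A<B$, $A<D$, $C<B$, $C<D$ (so $A\parallel C$ and $B\parallel D$). *)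

theory Defs
  imports Complex_Main
begin

definition has_induced_copy :: "'a set \<Rightarrow> ('a \<Rightarrow> 'a \<Rightarrow> bool) \<Rightarrow> 'b set set \<Rightarrow> bool" where
  "has_induced_copy P le F \<longleftrightarrow>
     (\<exists>f. inj_on f P \<and> f ` P \<subseteq> F \<and> (\<forall>u\<in>P. \<forall>v\<in>P. le u v \<longleftrightarrow> f u \<subseteq> f v))"

definition induced_saturated :: "nat \<Rightarrow> 'a set \<Rightarrow> ('a \<Rightarrow> 'a \<Rightarrow> bool) \<Rightarrow> nat set set \<Rightarrow> bool" where
  "induced_saturated n P le F \<longleftrightarrow>
     F \<subseteq> Pow {1..n} \<and> \<not> has_induced_copy P le F \<and>
     (\<forall>F'. F \<subset> F' \<and> F' \<subseteq> Pow {1..n} \<longrightarrow> has_induced_copy P le F')"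

definition isat :: "nat \<Rightarrow> 'a set \<Rightarrow> ('a \<Rightarrow> 'a \<Rightarrow> bool) \<Rightarrow> nat" where
  "isat n P le = (LEAST k. \<exists>F. induced_saturated n P le F \<and> card F = k)"

text \<open>The butterfly: A = 0, B = 1, C = 2, D = 3, with strict relations A<B, A<D, C<B, C<D.\<close>

definition butterfly :: "nat set" where
  "butterfly = {0, 1, 2, 3}"

definition butterfly_le :: "nat \<Rightarrow> nat \<Rightarrow> bool" where
  "butterfly_le u v \<longleftrightarrow> u = v \<or> (u, v) \<in> {(0, 1), (0, 3), (2, 1), (2, 3)}"

end

theory Submission
  imports Defs
begin

text \<open>
  Lower bound: in a saturated butterfly-free family \<open>F\<close> any two points \<open>i \<noteq> j\<close> of \<open>[n]\<close>
  are separated by a member of \<open>F\<close>. Otherwise either no member contains \<open>i\<close>, and \<open>{i}\<close>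
  could be added, or \<open>X - {j}\<close> could be added for a minimal member \<open>X \<ni> i\<close>: this set is
  a lower twin of \<open>X\<close>, so a butterfly using it would yield one using \<open>X\<close>. Hence
  \<open>i \<mapsto> {X \<in> F. i \<in> X}\<close> is injective and \<open>n \<le> 2 ^ |F|\<close>.

  Upper bound: the sets of size at most two together with the chain \<open>[3] \<subset> \<dots> \<subset> [n]\<close> form
  a saturated butterfly-free family. The two top sets of a butterfly share two points, so
  they cannot be small, and they cannot both lie in the chain. Any other set \<open>S\<close> with
  maximum \<open>m\<close> forms a butterfly with \<open>[m - 1]\<close> and two singletons from \<open>S - {m}\<close>.
\<close>

abbreviation has_butterfly :: "'a set set \<Rightarrow> bool" where
  "has_butterfly G \<equiv> has_induced_copy butterfly butterfly_le G"

definition butterfly_sets :: "'a set \<Rightarrow> 'a set \<Rightarrow> 'a set \<Rightarrow> 'a set \<Rightarrow> bool" where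
  "butterfly_sets A B C D \<longleftrightarrow> A \<subseteq> B \<and> A \<subseteq> D \<and> C \<subseteq> B \<and> C \<subseteq> D
     \<and> \<not> A \<subseteq> C \<and> \<not> C \<subseteq> A \<and> \<not> B \<subseteq> D \<and> \<not> D \<subseteq> B"

lemma has_butterfly_iff:
  "has_butterfly G \<longleftrightarrow> (\<exists>A B C D. {A, B, C, D} \<subseteq> G \<and> butterfly_sets A B C D)"
proof
  assume "has_butterfly G"
  then obtain f where f: "f ` butterfly \<subseteq> G"
      "\<forall>u\<in>butterfly. \<forall>v\<in>butterfly. butterfly_le u v \<longleftrightarrow> f u \<subseteq> f v"
    unfolding has_induced_copy_def by auto
  then have "butterfly_sets (f 0) (f 1) (f 2) (f 3)"
    unfolding butterfly_sets_def butterfly_def butterfly_le_def by simp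
  moreover have "{f 0, f 1, f 2, f 3} \<subseteq> G"
    using f(1) unfolding butterfly_def by auto
  ultimately show "\<exists>A B C D. {A, B, C, D} \<subseteq> G \<and> butterfly_sets A B C D" by blast
next
  assume "\<exists>A B C D. {A, B, C, D} \<subseteq> G \<and> butterfly_sets A B C D"
  then obtain A B C D where G: "{A, B, C, D} \<subseteq> G" and bf: "butterfly_sets A B C D"
    by auto
  define f where "f = (\<lambda>x::nat. if x = 0 then A else if x = 1 then B else if x = 2 then C else D)"
  have incl: "A \<subseteq> B" "A \<subseteq> D" "C \<subseteq> B" "C \<subseteq> D"
    and non_incl: "\<not> A \<subseteq> C" "\<not> C \<subseteq> A" "\<not> B \<subseteq> D" "\<not> D \<subseteq> B"
      "\<not> B \<subseteq> A" "\<not> D \<subseteq> A" "\<not> B \<subseteq> C" "\<not> D \<subseteq> C"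
    using bf unfolding butterfly_sets_def by blast+
  have "\<forall>u\<in>butterfly. \<forall>v\<in>butterfly. butterfly_le u v \<longleftrightarrow> f u \<subseteq> f v"
    by (simp add: f_def butterfly_def butterfly_le_def incl non_incl)
  moreover have "inj_on f butterfly"
    using non_incl by (auto simp: inj_on_def f_def butterfly_def)
  moreover have "f ` butterfly \<subseteq> G" using G unfolding f_def butterfly_def by auto
  ultimately show "has_butterfly G" unfolding has_induced_copy_def by blast
qed

lemma has_butterflyI: "{A, B, C, D} \<subseteq> G \<Longrightarrow> butterfly_sets A B C D \<Longrightarrow> has_butterfly G"
  unfolding has_butterfly_iff by (intro exI conjI)

lemma has_butterflyE:
  assumes "has_butterfly G"
  obtains A B C D where "{A, B, C, D} \<subseteq> G" "butterfly_sets A B C D"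
  using assms unfolding has_butterfly_iff by auto

lemma has_butterfly_mono:
  assumes "has_butterfly F" "F \<subseteq> G"
  shows "has_butterfly G"
proof -
  obtain A B C D where "{A, B, C, D} \<subseteq> F" "butterfly_sets A B C D"
    using assms(1) by (rule has_butterflyE)
  then show ?thesis using assms(2) by (intro has_butterflyI[of A B C D]) auto
qed

lemma butterfly_sets_map:
  assumes "butterfly_sets A B C D"
    and "\<And>Z W. Z \<in> {A, B, C, D} \<Longrightarrow> W \<in> {A, B, C, D} \<Longrightarrow> g Z \<subseteq> g W \<longleftrightarrow> Z \<subseteq> W"
  shows "butterfly_sets (g A) (g B) (g C) (g D)"
  using assms(1) unfolding butterfly_sets_def by (simp add: assms(2))

lemma butterfly_sets_no_lower_twin:
  assumes "butterfly_sets A B C D" and "S \<in> {A, B, C, D}" "X \<in> {A, B, C, D}" "S \<subset> X"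
    and "\<And>Y. Y \<in> {A, B, C, D} \<Longrightarrow> Y \<subset> X \<Longrightarrow> Y \<subseteq> S"
  shows False
proof -
  have "(S = A \<or> S = C) \<and> (X = B \<or> X = D)"
    using assms(1-4) unfolding butterfly_sets_def by blast
  then show False
    using assms(1) assms(5)[of A] assms(5)[of C] unfolding butterfly_sets_def by blast
qed

lemma has_butterfly_insert_fresh_singleton:
  assumes "\<not> has_butterfly F" and "\<forall>X\<in>F. i \<notin> X"
  shows "\<not> has_butterfly (insert {i} F)"
proof
  assume "has_butterfly (insert {i} F)"
  then obtain A B C D where Q: "{A, B, C, D} \<subseteq> insert {i} F"
    and bf: "butterfly_sets A B C D" by (rule has_butterflyE)
  have "A \<subset> B" "A \<subset> D" "C \<subset> B" "C \<subset> D" "A \<noteq> {}" "C \<noteq> {}"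
    using bf unfolding butterfly_sets_def by auto
  then have "{i} \<notin> {A, B, C, D}" using Q assms(2) by blast
  then have "{A, B, C, D} \<subseteq> F" using Q by blast
  then have "has_butterfly F" using bf by (rule has_butterflyI)
  with assms(1) show False by contradiction
qed

lemma has_butterfly_insert_lower_twin:
  assumes "\<not> has_butterfly F" and "X \<in> F" and "S \<subset> X"
    and above: "\<And>Y. Y \<in> F \<Longrightarrow> S \<subseteq> Y \<longleftrightarrow> X \<subseteq> Y"
    and below: "\<And>Y. Y \<in> F \<Longrightarrow> Y \<subset> X \<Longrightarrow> Y \<subseteq> S"
  shows "\<not> has_butterfly (insert S F)"
proof
  assume "has_butterfly (insert S F)"
  then obtain A B C D where Q: "{A, B, C, D} \<subseteq> insert S F"
    and bf: "butterfly_sets A B C D" by (rule has_butterflyE)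
  have below_iff: "Y \<subseteq> S \<longleftrightarrow> Y \<subseteq> X" if "Y \<in> F" "Y \<noteq> X" for Y
    using below[OF that(1)] \<open>S \<subset> X\<close> that(2) by auto
  consider "S \<notin> {A, B, C, D}" | "S \<in> {A, B, C, D}" "X \<in> {A, B, C, D}"
    | "S \<in> {A, B, C, D}" "X \<notin> {A, B, C, D}" by blast
  then show False
  proof cases
    case 1
    then have "{A, B, C, D} \<subseteq> F" using Q by blast
    then have "has_butterfly F" using bf by (rule has_butterflyI)
    with assms(1) show False by contradiction
  next
    case 2
    have "Y \<subseteq> S" if "Y \<in> {A, B, C, D}" "Y \<subset> X" for Y
      using that Q below by blast
    then show False using butterfly_sets_no_lower_twin[OF bf 2 \<open>S \<subset> X\<close>] by blast
  next
    case 3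
    have others: "Y \<in> F" "Y \<noteq> X" if "Y \<in> {A, B, C, D}" "Y \<noteq> S" for Y
      using that Q 3(2) by blast+
    define g where "g Z = (if Z = S then X else Z)" for Z
    have "g Z \<subseteq> g W \<longleftrightarrow> Z \<subseteq> W" if "Z \<in> {A, B, C, D}" "W \<in> {A, B, C, D}" for Z W
    proof (cases "Z = S"; cases "W = S")
      assume "Z = S" "W \<noteq> S"
      then show ?thesis using above[OF others(1)[OF that(2)]] by (simp add: g_def)
    next
      assume "Z \<noteq> S" "W = S"
      then show ?thesis using below_iff[OF others[OF that(1)]] by (simp add: g_def)
    qed (simp_all add: g_def)
    then have "butterfly_sets (g A) (g B) (g C) (g D)" by (rule butterfly_sets_map[OF bf])
    moreover have "{g A, g B, g C, g D} \<subseteq> F"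
      using others \<open>X \<in> F\<close> unfolding g_def by auto
    ultimately have "has_butterfly F" by (rule has_butterflyI[rotated])
    with assms(1) show False by contradiction
  qed
qed

lemma induced_saturated_insert:
  assumes "induced_saturated n P le F" "S \<subseteq> {1..n}" "S \<notin> F"
  shows "has_induced_copy P le (insert S F)"
  using assms unfolding induced_saturated_def by blast

lemma induced_saturated_finite: "induced_saturated n P le F \<Longrightarrow> finite F"
  unfolding induced_saturated_def by (meson finite_Pow_iff finite_atLeastAtMost finite_subset)

lemma butterfly_saturated_separates:
  assumes sat: "induced_saturated n butterfly butterfly_le F"
    and "i \<in> {1..n}" "j \<in> {1..n}" "i \<noteq> j"
  shows "\<exists>X\<in>F. \<not> (i \<in> X \<longleftrightarrow> j \<in> X)"
proof (rule ccontr)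
  assume "\<not> ?thesis"
  then have twins: "i \<in> X \<longleftrightarrow> j \<in> X" if "X \<in> F" for X using that by blast
  have FP: "F \<subseteq> Pow {1..n}" and nb: "\<not> has_butterfly F"
    using sat unfolding induced_saturated_def by auto
  show False
  proof (cases "\<exists>X\<in>F. i \<in> X")
    case False
    then have "has_butterfly (insert {i} F)"
      using induced_saturated_insert[OF sat] \<open>i \<in> {1..n}\<close> by blast
    then show False using has_butterfly_insert_fresh_singleton[OF nb] False by blast
  next
    case True
    then obtain X where X: "X \<in> F" "i \<in> X"
      and minimal: "\<And>Y. Y \<in> F \<Longrightarrow> i \<in> Y \<Longrightarrow> Y \<subseteq> X \<Longrightarrow> Y = X"
      using finite_has_minimal[of "{X \<in> F. i \<in> X}"] induced_saturated_finite[OF sat] by auto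
    define S where "S = X - {j}"
    have "S \<subset> X" using X twins unfolding S_def by auto
    have "S \<notin> F" using twins[of S] X(2) \<open>i \<noteq> j\<close> unfolding S_def by auto
    moreover have "S \<subseteq> {1..n}" using FP X(1) unfolding S_def by auto
    ultimately have "has_butterfly (insert S F)" by (intro induced_saturated_insert[OF sat])
    moreover have "S \<subseteq> Y \<longleftrightarrow> X \<subseteq> Y" if "Y \<in> F" for Y
      using twins[OF that] X \<open>i \<noteq> j\<close> unfolding S_def by auto
    moreover have "Y \<subseteq> S" if "Y \<in> F" "Y \<subset> X" for Y
      using minimal[OF that(1)] twins[OF that(1)] that(2) unfolding S_def by auto
    ultimately show False
      using has_butterfly_insert_lower_twin[OF nb X(1) \<open>S \<subset> X\<close>] by blast
  qed
qed

lemma butterfly_saturated_card_ge: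
  assumes "induced_saturated n butterfly butterfly_le F"
  shows "n \<le> 2 ^ card F"
proof -
  have "finite F" using induced_saturated_finite[OF assms] .
  have "inj_on (\<lambda>i. {X \<in> F. i \<in> X}) {1..n}"
  proof (rule inj_onI)
    fix i j assume "i \<in> {1..n}" "j \<in> {1..n}" "{X \<in> F. i \<in> X} = {X \<in> F. j \<in> X}"
    then show "i = j" using butterfly_saturated_separates[OF assms] by blast
  qed
  then have "card {1..n} \<le> card (Pow F)"
    by (rule card_inj_on_le) (auto simp: \<open>finite F\<close>)
  then show ?thesis using \<open>finite F\<close> by (simp add: card_Pow)
qed

lemma card_subsets_card_le:
  assumes "finite A"
  shows "card {X. X \<subseteq> A \<and> card X \<le> k} = (\<Sum>i\<le>k. card A choose i)"
proof (induction k)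
  case 0
  have "{X. X \<subseteq> A \<and> card X \<le> 0} = {X. X \<subseteq> A \<and> card X = 0}" by auto
  then show ?case using n_subsets[OF assms, of 0] by simp
next
  case (Suc k)
  have "{X. X \<subseteq> A \<and> card X \<le> Suc k}
      = {X. X \<subseteq> A \<and> card X \<le> k} \<union> {X. X \<subseteq> A \<and> card X = Suc k}"
    by auto
  moreover have "finite {X. X \<subseteq> A \<and> card X \<le> k}" "finite {X. X \<subseteq> A \<and> card X = Suc k}"
    using assms by auto
  ultimately show ?case
    using Suc n_subsets[OF assms, of "Suc k"] by (simp add: card_Un_disjoint disjoint_iff)
qed

definition small_sets_and_chain :: "nat \<Rightarrow> nat set set" where
  "small_sets_and_chain n = {X. X \<subseteq> {1..n} \<and> card X \<le> 2} \<union> (\<lambda>k. {1..k}) ` {3..n}"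

lemma card_small_sets_and_chain:
  assumes "n \<ge> 2"
  shows "card (small_sets_and_chain n) \<le> (n choose 2) + 2 * n - 1"
proof -
  have "card {X. X \<subseteq> {1..n} \<and> card X \<le> 2} = 1 + n + (n choose 2)"
    using card_subsets_card_le[of "{1..n}" 2] by (simp add: numeral_2_eq_2)
  moreover have "card ((\<lambda>k. {1..k}) ` {3..n}) \<le> n - 2"
    using card_image_le[of "{3..n}" "\<lambda>k. {1..k::nat}"] by simp
  moreover have "card (small_sets_and_chain n)
      \<le> card {X. X \<subseteq> {1..n} \<and> card X \<le> 2} + card ((\<lambda>k. {1..k}) ` {3..n})"
    unfolding small_sets_and_chain_def by (rule card_Un_le)
  ultimately show ?thesis using assms by linarith
qed

lemma no_butterfly_small_sets_and_chain: "\<not> has_butterfly (small_sets_and_chain n)"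
proof
  assume "has_butterfly (small_sets_and_chain n)"
  then obtain A B C D where G: "{A, B, C, D} \<subseteq> small_sets_and_chain n"
    and bf: "butterfly_sets A B C D" by (rule has_butterflyE)
  from bf obtain a c where "a \<in> A" "a \<notin> C" "c \<in> C" "c \<notin> A"
    unfolding butterfly_sets_def by blast
  then have ac: "{a, c} \<subseteq> B" "{a, c} \<subseteq> D" "a \<noteq> c"
    using bf unfolding butterfly_sets_def by blast+
  have not_small: "\<not> (Z \<subseteq> {1..n} \<and> card Z \<le> 2)" if "Z \<in> {B, D}" for Z
  proof
    assume small: "Z \<subseteq> {1..n} \<and> card Z \<le> 2"
    then have "finite Z" by (meson finite_atLeastAtMost finite_subset)
    then have "{a, c} = Z" using small ac that by (intro card_seteq) auto
    then show False using bf ac that unfolding butterfly_sets_def by auto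
  qed
  have "Z \<in> (\<lambda>k. {1..k}) ` {3..n}" if "Z \<in> {B, D}" for Z
    using G not_small[OF that] that unfolding small_sets_and_chain_def by auto
  then obtain k l where "B = {1..k}" "D = {1..l}" by (meson imageE insertCI)
  then show False
    using bf unfolding butterfly_sets_def by (metis atLeastatMost_subset_iff nat_le_linear order_refl)
qed

lemma exists_gap_below_Max:
  fixes S :: "nat set"
  assumes "finite S" "S \<noteq> {}" "0 \<notin> S" "S \<noteq> {1..Max S}"
  obtains c where "1 \<le> c" "c < Max S" "c \<notin> S"
proof -
  have "S \<subseteq> {1..Max S}"
  proof
    fix x assume "x \<in> S"
    then show "x \<in> {1..Max S}" using assms(1,3) by (cases x) auto
  qed
  then obtain c where "c \<in> {1..Max S}" "c \<notin> S" using assms(4) by blast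
  moreover have "Max S \<in> S" using assms(1,2) by simp
  ultimately show thesis using that by (cases "c = Max S") auto
qed

lemma butterfly_sets_below_Max:
  fixes S :: "nat set"
  assumes "finite S" "0 \<notin> S" "3 \<le> card S" "S \<noteq> {1..Max S}"
  obtains a b where "a \<in> S" "b \<in> S" "3 \<le> Max S - 1"
    "butterfly_sets {a} S {b} {1..Max S - 1}"
proof -
  define m where "m = Max S"
  have "S \<noteq> {}" using assms(3) by auto
  then have "m \<in> S" and le_m: "\<And>x. x \<in> S \<Longrightarrow> x \<le> m" using assms(1) by (auto simp: m_def)
  obtain c where c: "1 \<le> c" "c < m" "c \<notin> S"
    using exists_gap_below_Max[OF assms(1) \<open>S \<noteq> {}\<close> assms(2,4)] m_def by blast
  have "2 \<le> card (S - {m})" using assms(1,3) \<open>m \<in> S\<close> by simp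
  then obtain T where T: "T \<subseteq> S - {m}" "card T = 2" by (meson obtain_subset_with_card_n)
  then obtain a b where ab: "T = {a, b}" "a \<noteq> b" by (auto simp: card_2_iff)
  have "a < m" "b < m" using T ab le_m by fastforce+
  have "c \<notin> {a, b}" using T ab c by auto
  have "{a, b, c} \<subseteq> {1..m - 1}"
    using T ab assms(2) c \<open>a < m\<close> \<open>b < m\<close> by (auto simp: Suc_le_eq)
  then have "card {a, b, c} \<le> m - 1"
    by (metis card_atLeastAtMost card_mono diff_Suc_1 finite_atLeastAtMost)
  moreover have "card {a, b, c} = 3" using ab \<open>c \<notin> {a, b}\<close> by auto
  ultimately have "3 \<le> m - 1" by simp
  have "butterfly_sets {a} S {b} {1..m - 1}"
  proof -
    have "c \<in> {1..m - 1}" using c by auto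
    then have "\<not> {1..m - 1} \<subseteq> S" using c(3) by blast
    moreover have "\<not> S \<subseteq> {1..m - 1}" using \<open>m \<in> S\<close> \<open>c < m\<close> by auto
    ultimately show ?thesis
      unfolding butterfly_sets_def using T ab \<open>a < m\<close> \<open>b < m\<close> assms(2) by (auto simp: Suc_le_eq)
  qed
  then show thesis using that T ab \<open>3 \<le> m - 1\<close> m_def by auto
qed

lemma has_butterfly_insert_small_sets_and_chain:
  assumes "S \<subseteq> {1..n}" "S \<notin> small_sets_and_chain n"
  shows "has_butterfly (insert S (small_sets_and_chain n))"
proof -
  have "finite S" using assms(1) by (rule finite_subset) simp
  have "0 \<notin> S" using assms(1) by auto
  moreover have "3 \<le> card S"
    using assms unfolding small_sets_and_chain_def by auto
  moreover have "Max S \<le> n" using assms(1) \<open>finite S\<close> \<open>3 \<le> card S\<close>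
    by (metis Max_in atLeastAtMost_iff card.empty not_numeral_le_zero subsetD)
  moreover have "S \<noteq> {1..Max S}"
  proof
    assume S_eq: "S = {1..Max S}"
    then have "Max S \<in> {3..n}"
      using \<open>3 \<le> card S\<close> \<open>Max S \<le> n\<close> by (metis atLeastAtMost_iff card_atLeastAtMost diff_Suc_1)
    with S_eq show False using assms(2) unfolding small_sets_and_chain_def by blast
  qed
  ultimately obtain a b where ab: "a \<in> S" "b \<in> S" "3 \<le> Max S - 1"
    and bf: "butterfly_sets {a} S {b} {1..Max S - 1}"
    using butterfly_sets_below_Max \<open>finite S\<close> by blast
  have "{{a}, {b}, {1..Max S - 1}} \<subseteq> small_sets_and_chain n"
    using ab assms(1) \<open>Max S \<le> n\<close> unfolding small_sets_and_chain_def by auto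
  then show ?thesis
    using bf by (intro has_butterflyI[of "{a}" S "{b}" "{1..Max S - 1}"]) auto
qed

lemma induced_saturated_small_sets_and_chain:
  "induced_saturated n butterfly butterfly_le (small_sets_and_chain n)"
proof -
  have "has_butterfly F'" if F': "small_sets_and_chain n \<subset> F'" "F' \<subseteq> Pow {1..n}" for F'
  proof -
    obtain S where "S \<in> F'" "S \<notin> small_sets_and_chain n" using F'(1) by blast
    then have "has_butterfly (insert S (small_sets_and_chain n))"
      using F'(2) by (intro has_butterfly_insert_small_sets_and_chain) auto
    then show ?thesis using has_butterfly_mono \<open>S \<in> F'\<close> F'(1) by blast
  qed
  moreover have "small_sets_and_chain n \<subseteq> Pow {1..n}" unfolding small_sets_and_chain_def by auto
  ultimately show ?thesis
    unfolding induced_saturated_def using no_butterfly_small_sets_and_chain by blast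
qed

lemma isat_le_card: "induced_saturated n P le F \<Longrightarrow> isat n P le \<le> card F"
  unfolding isat_def by (rule Least_le) blast

lemma isat_attained:
  assumes "induced_saturated n P le F"
  obtains F' where "induced_saturated n P le F'" "card F' = isat n P le"
  using LeastI_ex[of "\<lambda>k. \<exists>F. induced_saturated n P le F \<and> card F = k"] assms
  unfolding isat_def by blast

theorem theorem1p7:
  fixes n :: nat
  assumes "n \<ge> 3"
  shows "\<lceil>log 2 (real n)\<rceil> \<le> int (isat n butterfly butterfly_le)
         \<and> isat n butterfly butterfly_le \<le> (n choose 2) + 2 * n - 1"
proof
  let ?k = "isat n butterfly butterfly_le"
  obtain F where "induced_saturated n butterfly butterfly_le F" "card F = ?k"
    using isat_attained[OF induced_saturated_small_sets_and_chain] .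
  then have "n \<le> 2 ^ ?k" using butterfly_saturated_card_ge by metis
  then have "log 2 (real n) \<le> real ?k" using log2_of_power_le assms by simp
  then show "\<lceil>log 2 (real n)\<rceil> \<le> int ?k" by (simp add: ceiling_le_iff)
  have "?k \<le> card (small_sets_and_chain n)"
    by (rule isat_le_card[OF induced_saturated_small_sets_and_chain])
  also have "\<dots> \<le> (n choose 2) + 2 * n - 1"
    using card_small_sets_and_chain assms by simp
  finally show "?k \<le> (n choose 2) + 2 * n - 1" .
qed

end
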